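(* In the logic $\mathrm{q}\L^{*}$, for all formulas $p,q,r,t\in F(V)$: (1) if $\vdash p\leftrightarrow q$, then $\vdash\neg p\leftrightarrow\neg q$; (2) if $\vdash p\leftrightarrow q$ and $\vdash r\leftrightarrow t$, then $\vdash(p\to r)\leftrightarrow(q\to t)$; (3) if $\vdash p\leftrightarrow q$ and $\vdash q\leftrightarrow r$, then $\vdash p\leftrightarrow r$; (4) $\vdash\neg(p\to q)\leftrightarrow(\neg p\to\neg q)$; (5) $\vdash p\leftrightarrow p$; (6) if $\vdash p_1\leftrightarrow r_1$, then $\vdash p\leftrightarrow r$, where $p_1$ is a subformula of $p$ and $r$ is obtained by replacing $p_1$ in $p$ with $r_1$; (7) $\vdash(p\to p)\leftrightarrow(q\to q)$; (8) $\vdash\neg\neg(p\to p)\leftrightarrow(p\to p)$; (9) $\vdash p\leftrightarrow\neg\neg p$; (10) $\vdash(\neg p\to q)\leftrightarrow(\neg q\to p)$; (11) $\vdash(\neg p)^{+}\leftrightarrow\neg p^{-}$ and $\vdash(\neg p)^{-}\leftrightarrow\neg p^{+}$; (12) if $\vdash p\leftrightarrow q$, then $\vdash p^{+}\leftrightarrow q^{+}$ and $\vdash p^{-}\leftrightarrow q^{-}$.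
   Context: Let $V=\{p_1,p_2,\ldots\}$ be a set of propositional variables and $F(V)$ the set of formulas built from $V$ and the constant $1$ with the binary connective $\to$ and the unary connectives $\neg$, ${}^{+}$, ${}^{-}$ (postfix ${}^+,{}^-$ bind tighter than $\neg$, which binds tighter than $\to$; so $\neg p^{-}$ means $\neg(p^{-})$). Abbreviations: $p\vee q:=((p^{+}\to q^{+})^{+}\to(\neg p)^{-})\to((q^{-}\to p^{-})^{-}\to p^{-})$; an axiom written $A\leftrightarrow B$ stands for the two axioms $A\to B$ and $B\to A$, and $\vdash A\leftrightarrow B$ means $\vdash A\to B$ and $\vdash B\to A$. Axiom schemas of $\mathrm{q}\L^{*}$ (for all formulas $p,q,r$): (Q1) $(p\to q)\leftrightarrow(\neg q\to\neg p)$; (Q2) $1\leftrightarrow((1\to p)\to 1)$; (Q3) $p\leftrightarrow((q\to q)\to p)$; (Q4) $(p\to q)\leftrightarrow((q^{+}\to p^{-})\to(p^{+}\to q^{-}))$; (Q5) $\neg(p\to q)\leftrightarrow(q\to p)$; (Q6) $(p\to(\neg p\to q))^{+}\leftrightarrow(p^{+}\to(\neg p^{+}\to q^{+}))$; (Q7) $(p\to(q\vee r))\leftrightarrow((p\to r)\vee(p\to q))$; (Q8) $(p\vee(q\vee r))\leftrightarrow((p\vee q)\vee r)$; (Q9) $((p\to 1)\to((q\to 1)\to r))\to((q\to 1)\to((p\to 1)\to r))$; (Q10) $p\to 1$; (Q11) $((1\to 1)\to p^{+})\leftrightarrow((p\to 1)\to 1)$ and $((1\to 1)\to p^{-})\leftrightarrow((p\to\neg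 1)\to\neg 1)$. Deduction rules: (R1) from $p$ and $p\to q$ infer $(r\to r)\to q$; (R2) from $(r\to r)\to(p\to q)$ infer $p\to q$; (R3) from $p\to q$ and $r\to t$ infer $(q\to r)\to(p\to t)$. A proof of $q_n$ is a finite sequence $q_1,\dots,q_n$ of formulas each of which is an axiom or obtained from earlier members by a rule; then $\vdash q_n$. *)

theory Defs
  imports Main
begin

datatype form =
    Var nat
  | One
  | Imp form form
  | Neg form
  | Pls form
  | Mns form

definition Vee :: "form \<Rightarrow> form \<Rightarrow> form" where
  "Vee p q = Imp (Imp (Pls (Imp (Pls p) (Pls q))) (Mns (Neg p)))
                 (Imp (Mns (Imp (Mns q) (Mns p))) (Mns p))"

text \<open>Axioms of qL*; each A <-> B schema yields the two axioms A -> B and B -> A.\<close>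
inductive axiom :: "form \<Rightarrow> bool" where
  Q1a: "axiom (Imp (Imp p q) (Imp (Neg q) (Neg p)))"
| Q1b: "axiom (Imp (Imp (Neg q) (Neg p)) (Imp p q))"
| Q2a: "axiom (Imp One (Imp (Imp One p) One))"
| Q2b: "axiom (Imp (Imp (Imp One p) One) One)"
| Q3a: "axiom (Imp p (Imp (Imp q q) p))"
| Q3b: "axiom (Imp (Imp (Imp q q) p) p)"
| Q4a: "axiom (Imp (Imp p q) (Imp (Imp (Pls q) (Mns p)) (Imp (Pls p) (Mns q))))"
| Q4b: "axiom (Imp (Imp (Imp (Pls q) (Mns p)) (Imp (Pls p) (Mns q))) (Imp p q))"
| Q5a: "axiom (Imp (Neg (Imp p q)) (Imp q p))"
| Q5b: "axiom (Imp (Imp q p) (Neg (Imp p q)))"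
| Q6a: "axiom (Imp (Pls (Imp p (Imp (Neg p) q))) (Imp (Pls p) (Imp (Neg (Pls p)) (Pls q))))"
| Q6b: "axiom (Imp (Imp (Pls p) (Imp (Neg (Pls p)) (Pls q))) (Pls (Imp p (Imp (Neg p) q))))"
| Q7a: "axiom (Imp (Imp p (Vee q r)) (Vee (Imp p r) (Imp p q)))"
| Q7b: "axiom (Imp (Vee (Imp p r) (Imp p q)) (Imp p (Vee q r)))"
| Q8a: "axiom (Imp (Vee p (Vee q r)) (Vee (Vee p q) r))"
| Q8b: "axiom (Imp (Vee (Vee p q) r) (Vee p (Vee q r)))"
| Q9: "axiom (Imp (Imp (Imp p One) (Imp (Imp q One) r)) (Imp (Imp q One) (Imp (Imp p One) r)))"
| Q10: "axiom (Imp p One)"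
| Q11a: "axiom (Imp (Imp (Imp One One) (Pls p)) (Imp (Imp p One) One))"
| Q11b: "axiom (Imp (Imp (Imp p One) One) (Imp (Imp One One) (Pls p)))"
| Q11c: "axiom (Imp (Imp (Imp One One) (Mns p)) (Imp (Imp p (Neg One)) (Neg One)))"
| Q11d: "axiom (Imp (Imp (Imp p (Neg One)) (Neg One)) (Imp (Imp One One) (Mns p)))"

text \<open>Provability (least set containing the axioms and closed under R1--R3;
  equivalent to existence of a finite proof sequence).\<close>
inductive prov :: "form \<Rightarrow> bool" where
  ax: "axiom p \<Longrightarrow> prov p"
| R1: "prov p \<Longrightarrow> prov (Imp p q) \<Longrightarrow> prov (Imp (Imp r r) q)"
| R2: "prov (Imp (Imp r r) (Imp p q)) \<Longrightarrow> prov (Imp p q)"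
| R3: "prov (Imp p q) \<Longrightarrow> prov (Imp r t) \<Longrightarrow> prov (Imp (Imp q r) (Imp p t))"

definition prov_iff :: "form \<Rightarrow> form \<Rightarrow> bool" where
  "prov_iff a b \<longleftrightarrow> prov (Imp a b) \<and> prov (Imp b a)"

inductive repl :: "form \<Rightarrow> form \<Rightarrow> form \<Rightarrow> form \<Rightarrow> bool" where
  here: "repl p1 r1 p1 r1"
| impL: "repl p1 r1 a b \<Longrightarrow> repl p1 r1 (Imp a c) (Imp b c)"
| impR: "repl p1 r1 a b \<Longrightarrow> repl p1 r1 (Imp c a) (Imp c b)"
| neg: "repl p1 r1 a b \<Longrightarrow> repl p1 r1 (Neg a) (Neg b)"
| pls: "repl p1 r1 a b \<Longrightarrow> repl p1 r1 (Pls a) (Pls b)"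
| mns: "repl p1 r1 a b \<Longrightarrow> repl p1 r1 (Mns a) (Mns b)"

end

theory Submission
  imports Defs
begin

text \<open>Provable equivalence is a congruence: R3 makes implication antitone in its
  antecedent and monotone in its consequent, Q1 transfers this to negation, and Q11
  together with Q3 expresses Pls p and Mns p through implication, so they inherit it.
  Since every formula is equivalent to an implication by Q3, applying Q5 twice yields
  double negation, from which the remaining equivalences follow by short chains.\<close>

text \<open>R1 only concludes (r \<rightarrow> r) \<rightarrow> q and R2 can strip that antecedent only from an
  implication, so modus ponens is available just for implicational conclusions.\<close>
lemma prov_mp_Imp: "prov p \<Longrightarrow> prov (Imp p (Imp a b)) \<Longrightarrow> prov (Imp a b)"
  by (rule prov.R2[of One], rule prov.R1)

lemma prov_Imp_refl: "prov (Imp p p)"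
proof -
  have "prov (Imp (Imp (Imp (Imp One One) p) (Imp (Imp One One) p)) (Imp p p))"
    by (intro prov.R3 prov.ax axiom.Q3a axiom.Q3b)
  then show ?thesis
    by (rule prov.R2)
qed

lemma prov_Imp_trans: "prov (Imp a b) \<Longrightarrow> prov (Imp b c) \<Longrightarrow> prov (Imp a c)"
  by (rule prov_mp_Imp, assumption, rule prov.R3, assumption, rule prov_Imp_refl)

lemma prov_iff_refl: "prov_iff p p"
  by (simp add: prov_iff_def prov_Imp_refl)

lemma prov_iff_sym: "prov_iff p q \<Longrightarrow> prov_iff q p"
  by (simp add: prov_iff_def)

lemma prov_iff_trans [trans]: "prov_iff p q \<Longrightarrow> prov_iff q r \<Longrightarrow> prov_iff p r"
  unfolding prov_iff_def using prov_Imp_trans by blast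

lemma prov_iff_axiomI: "axiom (Imp a b) \<Longrightarrow> axiom (Imp b a) \<Longrightarrow> prov_iff a b"
  by (simp add: prov_iff_def prov.ax)

lemma prov_iff_Imp: "prov_iff p q \<Longrightarrow> prov_iff r t \<Longrightarrow> prov_iff (Imp p r) (Imp q t)"
  unfolding prov_iff_def using prov.R3 by blast

lemma prov_iff_Neg: "prov_iff p q \<Longrightarrow> prov_iff (Neg p) (Neg q)"
  unfolding prov_iff_def using prov_mp_Imp prov.ax axiom.Q1a by blast

lemma prov_iff_contrapos: "prov_iff (Imp p q) (Imp (Neg q) (Neg p))"
  by (intro prov_iff_axiomI axiom.Q1a axiom.Q1b)

lemma prov_iff_taut_Imp: "prov_iff p (Imp (Imp q q) p)"
  by (intro prov_iff_axiomI axiom.Q3a axiom.Q3b)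

lemma prov_iff_Neg_Imp_swap: "prov_iff (Neg (Imp p q)) (Imp q p)"
  by (intro prov_iff_axiomI axiom.Q5a axiom.Q5b)

lemma prov_iff_Pls_unfold: "prov_iff (Pls p) (Imp (Imp p One) One)"
proof -
  have "prov_iff (Pls p) (Imp (Imp One One) (Pls p))"
    by (rule prov_iff_taut_Imp)
  also have "prov_iff \<dots> (Imp (Imp p One) One)"
    by (intro prov_iff_axiomI axiom.Q11a axiom.Q11b)
  finally show ?thesis .
qed

lemma prov_iff_Mns_unfold: "prov_iff (Mns p) (Imp (Imp p (Neg One)) (Neg One))"
proof -
  have "prov_iff (Mns p) (Imp (Imp One One) (Mns p))"
    by (rule prov_iff_taut_Imp)
  also have "prov_iff \<dots> (Imp (Imp p (Neg One)) (Neg One))"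
    by (intro prov_iff_axiomI axiom.Q11c axiom.Q11d)
  finally show ?thesis .
qed

lemma prov_iff_Pls: "prov_iff p q \<Longrightarrow> prov_iff (Pls p) (Pls q)"
  by (rule prov_iff_trans[OF prov_iff_Pls_unfold],
      rule prov_iff_trans[OF _ prov_iff_sym[OF prov_iff_Pls_unfold]])
     (intro prov_iff_Imp prov_iff_refl)

lemma prov_iff_Mns: "prov_iff p q \<Longrightarrow> prov_iff (Mns p) (Mns q)"
  by (rule prov_iff_trans[OF prov_iff_Mns_unfold],
      rule prov_iff_trans[OF _ prov_iff_sym[OF prov_iff_Mns_unfold]])
     (intro prov_iff_Imp prov_iff_refl)

lemma prov_iff_repl: "repl p1 r1 a b \<Longrightarrow> prov_iff p1 r1 \<Longrightarrow> prov_iff a b"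
  by (induction rule: repl.induct)
     (auto intro: prov_iff_Imp prov_iff_refl prov_iff_Neg prov_iff_Pls prov_iff_Mns)

lemma prov_iff_Neg_Neg: "prov_iff p (Neg (Neg p))"
proof -
  let ?u = "Imp One One"
  have "prov_iff p (Imp ?u p)"
    by (rule prov_iff_taut_Imp)
  also have "prov_iff \<dots> (Neg (Imp p ?u))"
    by (rule prov_iff_sym, rule prov_iff_Neg_Imp_swap)
  also have "prov_iff \<dots> (Neg (Neg (Imp ?u p)))"
    by (intro prov_iff_Neg prov_iff_sym[OF prov_iff_Neg_Imp_swap])
  also have "prov_iff \<dots> (Neg (Neg p))"
    by (intro prov_iff_Neg prov_iff_sym[OF prov_iff_taut_Imp])
  finally show ?thesis .
qed

lemma prov_iff_Neg_Imp: "prov_iff (Neg (Imp p q)) (Imp (Neg p) (Neg q))"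
  using prov_iff_Neg_Imp_swap prov_iff_contrapos by (rule prov_iff_trans)

lemma prov_iff_contrapos_Neg: "prov_iff (Imp (Neg p) q) (Imp (Neg q) p)"
proof -
  have "prov_iff (Imp (Neg p) q) (Imp (Neg q) (Neg (Neg p)))"
    by (rule prov_iff_contrapos)
  also have "prov_iff \<dots> (Imp (Neg q) p)"
    by (intro prov_iff_Imp prov_iff_refl prov_iff_sym[OF prov_iff_Neg_Neg])
  finally show ?thesis .
qed

lemma prov_iff_Imp_refl: "prov_iff (Imp p p) (Imp q q)"
  unfolding prov_iff_def
  using prov_mp_Imp[OF prov_Imp_refl prov.ax[OF axiom.Q3a]] by blast

lemma prov_iff_Pls_Neg: "prov_iff (Pls (Neg p)) (Neg (Mns p))"
proof -
  have "prov_iff (Pls (Neg p)) (Imp (Imp (Neg p) One) One)"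
    by (rule prov_iff_Pls_unfold)
  also have "prov_iff \<dots> (Imp (Imp (Neg One) p) One)"
    by (intro prov_iff_Imp prov_iff_refl prov_iff_contrapos_Neg)
  also have "prov_iff \<dots> (Imp (Neg (Imp p (Neg One))) (Neg (Neg One)))"
    by (intro prov_iff_Imp prov_iff_sym[OF prov_iff_Neg_Imp_swap] prov_iff_Neg_Neg)
  also have "prov_iff \<dots> (Imp (Neg One) (Imp p (Neg One)))"
    by (rule prov_iff_sym, rule prov_iff_contrapos)
  also have "prov_iff \<dots> (Neg (Imp (Imp p (Neg One)) (Neg One)))"
    by (rule prov_iff_sym, rule prov_iff_Neg_Imp_swap)
  also have "prov_iff \<dots> (Neg (Mns p))"
    by (intro prov_iff_Neg prov_iff_sym[OF prov_iff_Mns_unfold])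
  finally show ?thesis .
qed

lemma prov_iff_Mns_Neg: "prov_iff (Mns (Neg p)) (Neg (Pls p))"
proof -
  have "prov_iff (Mns (Neg p)) (Imp (Imp (Neg p) (Neg One)) (Neg One))"
    by (rule prov_iff_Mns_unfold)
  also have "prov_iff \<dots> (Imp (Imp One p) (Neg One))"
    by (intro prov_iff_Imp prov_iff_refl prov_iff_sym[OF prov_iff_contrapos])
  also have "prov_iff \<dots> (Imp (Neg (Neg One)) (Neg (Imp One p)))"
    by (rule prov_iff_contrapos)
  also have "prov_iff \<dots> (Imp One (Imp p One))"
    by (intro prov_iff_Imp prov_iff_sym[OF prov_iff_Neg_Neg] prov_iff_Neg_Imp_swap)
  also have "prov_iff \<dots> (Neg (Imp (Imp p One) One))"
    by (rule prov_iff_sym, rule prov_iff_Neg_Imp_swap)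
  also have "prov_iff \<dots> (Neg (Pls p))"
    by (intro prov_iff_Neg prov_iff_sym[OF prov_iff_Pls_unfold])
  finally show ?thesis .
qed

theorem proposition5p1:
  fixes p q r t :: form
  shows "(prov_iff p q \<longrightarrow> prov_iff (Neg p) (Neg q))
    \<and> (prov_iff p q \<and> prov_iff r t \<longrightarrow> prov_iff (Imp p r) (Imp q t))
    \<and> (prov_iff p q \<and> prov_iff q r \<longrightarrow> prov_iff p r)
    \<and> prov_iff (Neg (Imp p q)) (Imp (Neg p) (Neg q))
    \<and> prov_iff p p
    \<and> (\<forall>p1 r1 a b. prov_iff p1 r1 \<and> repl p1 r1 a b \<longrightarrow> prov_iff a b)
    \<and> prov_iff (Imp p p) (Imp q q)
    \<and> prov_iff (Neg (Neg (Imp p p))) (Imp p p)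
    \<and> prov_iff p (Neg (Neg p))
    \<and> prov_iff (Imp (Neg p) q) (Imp (Neg q) p)
    \<and> prov_iff (Pls (Neg p)) (Neg (Mns p)) \<and> prov_iff (Mns (Neg p)) (Neg (Pls p))
    \<and> (prov_iff p q \<longrightarrow> prov_iff (Pls p) (Pls q) \<and> prov_iff (Mns p) (Mns q))"
  by (intro conjI impI allI; (elim conjE)?)
     (erule prov_iff_Neg prov_iff_Pls prov_iff_Mns | erule (1) prov_iff_Imp prov_iff_trans
      | erule (1) prov_iff_repl[rotated]
      | rule prov_iff_Neg_Imp prov_iff_refl prov_iff_Imp_refl prov_iff_Neg_Neg
          prov_iff_sym[OF prov_iff_Neg_Neg] prov_iff_contrapos_Neg prov_iff_Pls_Neg
          prov_iff_Mns_Neg)+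

end
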